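(* Let $H$ be a transitive permutation group on a finite set $\Delta$ with $|\Delta|\ge2$, let $K$ be a permutation group on a finite nonempty set $\Gamma$, and let $G=H\wr K$ act in product action on $\Omega=\mathrm{Fun}(\Gamma,\Delta)$. Then \[ \mathbf{m}(G)\le\mathbf{m}(H)^{|\Gamma|}. \]
   Context: $\mathrm{Fun}(\Gamma,\Delta)$ is the set of functions $\Gamma\to\Delta$ (the $|\Gamma|$-fold Cartesian power of $\Delta$). The product action of $g=(h_\gamma)_{\gamma\in\Gamma}k\in H\wr K=\mathrm{Fun}(\Gamma,H)\rtimes K$ is $f^g(\gamma)=f(k^{-1}\gamma)^{h_{k^{-1}\gamma}}$ (writing the action of $K$ on $\Gamma$ on the left). For a transitive permutation group $X$ on a finite set with at least $2$ points, a subset $A$ is self-separable for $X$ if there exists $x\in X$ with $A\cap A^x=\emptyset$; $\mathbf{m}(X)$ is the minimum cardinality of a subset that is not self-separable for $X$. *)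

theory Defs
  imports "HOL-Library.FuncSet"
begin

definition perm_group_on :: "'a set \<Rightarrow> ('a \<Rightarrow> 'a) set \<Rightarrow> bool" where
  "perm_group_on D X \<longleftrightarrow> X \<noteq> {} \<and>
     (\<forall>x\<in>X. bij x \<and> (\<forall>a. a \<notin> D \<longrightarrow> x a = a)) \<and>
     (\<forall>x\<in>X. \<forall>y\<in>X. x \<circ> y \<in> X) \<and> (\<forall>x\<in>X. inv x \<in> X)"

definition transitive_on :: "'a set \<Rightarrow> ('a \<Rightarrow> 'a) set \<Rightarrow> bool" where
  "transitive_on D X \<longleftrightarrow> (\<forall>a\<in>D. \<forall>b\<in>D. \<exists>x\<in>X. x a = b)"

definition prod_action :: "'g set \<Rightarrow> ('g \<Rightarrow> 'g) \<Rightarrow> ('g \<Rightarrow> 'd \<Rightarrow> 'd) \<Rightarrow> ('g \<Rightarrow> 'd) \<Rightarrow> ('g \<Rightarrow> 'd)" where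
  "prod_action \<Gamma> k h f = (\<lambda>\<gamma>. if \<gamma> \<in> \<Gamma> then h (inv k \<gamma>) (f (inv k \<gamma>)) else undefined)"

text \<open>The wreath product H wr K, as the set of permutations of Fun(Gamma,Delta) it induces.\<close>
definition wreath_prod_action :: "'g set \<Rightarrow> ('d \<Rightarrow> 'd) set \<Rightarrow> ('g \<Rightarrow> 'g) set
    \<Rightarrow> (('g \<Rightarrow> 'd) \<Rightarrow> ('g \<Rightarrow> 'd)) set" where
  "wreath_prod_action \<Gamma> H K =
     {prod_action \<Gamma> k h | k h. k \<in> K \<and> h \<in> \<Gamma> \<rightarrow>\<^sub>E H}"

definition self_separable :: "('a \<Rightarrow> 'a) set \<Rightarrow> 'a set \<Rightarrow> bool" where
  "self_separable X A \<longleftrightarrow> (\<exists>x\<in>X. A \<inter> x ` A = {})"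

definition min_nonsep :: "'a set \<Rightarrow> ('a \<Rightarrow> 'a) set \<Rightarrow> nat" where
  "min_nonsep D X = (LEAST n. \<exists>A. A \<subseteq> D \<and> card A = n \<and> \<not> self_separable X A)"

end

theory Submission
  imports Defs
begin

text \<open>If \<open>A \<subseteq> \<Delta>\<close> is not self-separable for \<open>H\<close>, then \<open>Fun(\<Gamma>, A)\<close> is not self-separable
  for \<open>H wr K\<close>: given \<open>g = (h\<^sub>\<gamma>)\<^sub>\<gamma> k\<close>, pick in each coordinate a point \<open>a\<^sub>\<gamma> \<in> A\<close> with
  \<open>h\<^sub>\<gamma> a\<^sub>\<gamma> \<in> A\<close>; then both \<open>a\<close> and \<open>a\<^sup>g\<close> lie in \<open>Fun(\<Gamma>, A)\<close>, which has
  \<open>|A|\<^bsup>|\<Gamma>|\<^esup>\<close> elements. Taking \<open>|A| = m(H)\<close> gives the bound; \<open>m(H)\<close> is attained because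
  \<open>\<Delta>\<close> itself, being \<open>H\<close>-invariant, is never self-separable.\<close>

lemma perm_group_on_image_eq:
  assumes "perm_group_on D X" and "x \<in> X"
  shows "x ` D = D"
proof -
  have "bij x" and fix_outside: "\<And>a. a \<notin> D \<Longrightarrow> x a = a"
    using assms unfolding perm_group_on_def by auto
  have mem_iff: "x a \<in> D \<longleftrightarrow> a \<in> D" for a
    using fix_outside bij_is_inj[OF \<open>bij x\<close>] by (metis injD)
  show ?thesis
  proof (intro subset_antisym subsetI)
    fix d assume "d \<in> D"
    obtain a where "d = x a" using bij_is_surj[OF \<open>bij x\<close>] by auto
    with \<open>d \<in> D\<close> mem_iff show "d \<in> x ` D" by auto
  qed (use mem_iff in auto)
qed

lemma perm_group_on_inv_mem:
  assumes "perm_group_on D X" and "x \<in> X" and "d \<in> D"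
  shows "inv x d \<in> D"
proof -
  have "inj x" using assms(1,2) unfolding perm_group_on_def by (auto dest: bij_is_inj)
  moreover obtain a where "a \<in> D" "d = x a"
    using perm_group_on_image_eq[OF assms(1,2)] assms(3) by auto
  ultimately show ?thesis by simp
qed

lemma not_self_separable_domain:
  assumes "perm_group_on D X" and "D \<noteq> {}"
  shows "\<not> self_separable X D"
  using assms perm_group_on_image_eq unfolding self_separable_def by (metis inf.idem)

lemma min_nonsep_le:
  assumes "A \<subseteq> D" and "\<not> self_separable X A"
  shows "min_nonsep D X \<le> card A"
  unfolding min_nonsep_def using assms by (intro Least_le) blast

lemma min_nonsep_attained:
  assumes "A \<subseteq> D" and "\<not> self_separable X A"
  obtains B where "B \<subseteq> D" and "card B = min_nonsep D X" and "\<not> self_separable X B"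
proof -
  have "\<exists>n B. B \<subseteq> D \<and> card B = n \<and> \<not> self_separable X B"
    using assms by blast
  from LeastI_ex[OF this] show thesis
    using that unfolding min_nonsep_def by blast
qed

lemma prod_action_PiE:
  assumes "perm_group_on \<Gamma> K" and "k \<in> K"
    and "\<And>\<gamma>. \<gamma> \<in> \<Gamma> \<Longrightarrow> f \<gamma> \<in> A \<and> h \<gamma> (f \<gamma>) \<in> A"
  shows "prod_action \<Gamma> k h f \<in> \<Gamma> \<rightarrow>\<^sub>E A"
  using assms(3) perm_group_on_inv_mem[OF assms(1,2)] unfolding prod_action_def by auto

lemma not_self_separable_wreath_PiE:
  assumes "perm_group_on \<Gamma> K" and "\<not> self_separable H A"
  shows "\<not> self_separable (wreath_prod_action \<Gamma> H K) (\<Gamma> \<rightarrow>\<^sub>E A)"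
proof
  assume "self_separable (wreath_prod_action \<Gamma> H K) (\<Gamma> \<rightarrow>\<^sub>E A)"
  then obtain k h where "k \<in> K" and "h \<in> \<Gamma> \<rightarrow>\<^sub>E H"
    and disjoint: "(\<Gamma> \<rightarrow>\<^sub>E A) \<inter> prod_action \<Gamma> k h ` (\<Gamma> \<rightarrow>\<^sub>E A) = {}"
    unfolding self_separable_def wreath_prod_action_def by auto
  have "\<forall>\<gamma>\<in>\<Gamma>. \<exists>a\<in>A. h \<gamma> a \<in> A"
    using assms(2) \<open>h \<in> \<Gamma> \<rightarrow>\<^sub>E H\<close> unfolding self_separable_def by blast
  then obtain a where a: "\<And>\<gamma>. \<gamma> \<in> \<Gamma> \<Longrightarrow> a \<gamma> \<in> A \<and> h \<gamma> (a \<gamma>) \<in> A"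
    by metis
  define f where "f = restrict a \<Gamma>"
  have "f \<in> \<Gamma> \<rightarrow>\<^sub>E A" and "prod_action \<Gamma> k h f \<in> \<Gamma> \<rightarrow>\<^sub>E A"
    using a prod_action_PiE[OF assms(1) \<open>k \<in> K\<close>, of f A h] unfolding f_def by auto
  with disjoint show False by blast
qed

theorem theoremH:
  fixes \<Delta> :: "'d set" and \<Gamma> :: "'g set"
    and H :: "('d \<Rightarrow> 'd) set" and K :: "('g \<Rightarrow> 'g) set"
  assumes "finite \<Delta>" and "card \<Delta> \<ge> 2"
    and "perm_group_on \<Delta> H" and "transitive_on \<Delta> H"
    and "finite \<Gamma>" and "\<Gamma> \<noteq> {}"
    and "perm_group_on \<Gamma> K"
  shows "min_nonsep (\<Gamma> \<rightarrow>\<^sub>E \<Delta>) (wreath_prod_action \<Gamma> H K)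
           \<le> min_nonsep \<Delta> H ^ card \<Gamma>"
proof -
  have "\<Delta> \<noteq> {}" using assms(2) by auto
  with assms(3) have "\<not> self_separable H \<Delta>" by (rule not_self_separable_domain)
  then obtain A where "A \<subseteq> \<Delta>" and card_A: "card A = min_nonsep \<Delta> H"
    and "\<not> self_separable H A"
    by (rule min_nonsep_attained[OF subset_refl])
  have "\<Gamma> \<rightarrow>\<^sub>E A \<subseteq> \<Gamma> \<rightarrow>\<^sub>E \<Delta>" using \<open>A \<subseteq> \<Delta>\<close> by (rule PiE_mono)
  moreover have "\<not> self_separable (wreath_prod_action \<Gamma> H K) (\<Gamma> \<rightarrow>\<^sub>E A)"
    using assms(7) \<open>\<not> self_separable H A\<close> by (rule not_self_separable_wreath_PiE)
  ultimately have "min_nonsep (\<Gamma> \<rightarrow>\<^sub>E \<Delta>) (wreath_prod_action \<Gamma> H K) \<le> card (\<Gamma> \<rightarrow>\<^sub>E A)"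
    by (rule min_nonsep_le)
  also have "\<dots> = min_nonsep \<Delta> H ^ card \<Gamma>"
    using \<open>finite \<Gamma>\<close> card_A by (simp add: card_PiE)
  finally show ?thesis .
qed

end
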